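(* Over strict timed traces, every metric formula is MHT-equivalent to a metric formula in unary normal form.
   Context: Metric formulas over $\mathcal{A}$: $\varphi ::= p \mid \bot \mid \varphi_1\otimes\varphi_2 \mid \bullet_I\varphi \mid \varphi_1\,\mathsf{S}_I\,\varphi_2 \mid \varphi_1\,\mathsf{T}_I\,\varphi_2 \mid \bigcirc_I\varphi \mid \varphi_1\,\mathsf{U}_I\,\varphi_2 \mid \varphi_1\,\mathsf{R}_I\,\varphi_2$, $\otimes\in\{\to,\wedge,\vee\}$, $I=[m,n)$, $m\in\mathbb{N}$, $n\in\mathbb{N}\cup\{\omega\}$; omitted subscript means $[0,\omega)$. Derived unary operators: $\blacksquare_I\varphi=\bot\,\mathsf{T}_I\,\varphi$, eventually before $\top\,\mathsf{S}_I\,\varphi$, $\widehat{\bullet}_I\varphi=\bullet_I\varphi\vee\neg\bullet_I\top$, $\Box_I\varphi=\bot\,\mathsf{R}_I\,\varphi$, $\Diamond_I\varphi=\top\,\mathsf{U}_I\,\varphi$, $\widehat{\bigcirc}_I\varphi=\bigcirc_I\varphi\vee\neg\bigcirc_I\top$ (with $\neg\varphi=\varphi\to\bot$, $\top=\neg\bot$). A metric formula is in unary normal form if intervals only affect unary temporal operators ($\bigcirc_I,\widehat{\bigcirc}_I,\Diamond_I,\Box_I,\bullet_I,\widehat{\bullet}_I,\blacksquare_I$, eventually before), while the binary operators $\mathsf{U},\mathsf{R},\mathsf{S},\mathsf{T}$ occur only with interval $[0,\omega)$ (no attached interval). Timed HT-trace $\mathbf{M}=(\langle\mathbf{H},\mathbf{T}\rangle,\tau)$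 of length $\lambda$: $H_i\subseteq T_i\subseteq\mathcal{A}$, $\tau:[0,\lambda)\to\mathbb{N}$, $\tau(0)=0$; strict means $\tau(i)<\tau(i+1)$ whenever $i+1<\lambda$. Satisfaction at $k$: $\bot$ never; $p$ iff $p\in H_k$; $\wedge,\vee$ usual; $\varphi\to\psi$ iff for both $\mathbf{M}'=\mathbf{M}$ and $\mathbf{M}'=(\langle\mathbf{T},\mathbf{T}\rangle,\tau)$, $\mathbf{M}',k\not\models\varphi$ or $\mathbf{M}',k\models\psi$; $\bullet_I\varphi$: $k>0$, $\varphi$ at $k-1$, $\tau(k)-\tau(k-1)\in I$; $\varphi\,\mathsf{S}_I\,\psi$: some $j\in[0,k]$ with $\tau(k)-\tau(j)\in I$, $\psi$ at $j$, $\varphi$ at all $i\in(j,k]$; $\varphi\,\mathsf{T}_I\,\psi$: for all such $j$, $\psi$ at $j$ or $\varphi$ at some $i\in(j,k]$; $\bigcirc_I\varphi$: $k+1<\lambda$, $\varphi$ at $k+1$, $\tau(k+1)-\tau(k)\in I$; $\varphi\,\mathsf{U}_I\,\psi$: some $j\in[k,\lambda)$ with $\tau(j)-\tau(k)\in I$, $\psi$ at $j$, $\varphi$ at all $i\in[k,j)$; $\varphi\,\mathsf{R}_I\,\psi$: for all such $j$, $\psi$ at $j$ or $\varphi$ at some $i\in[k,j)$. Equivalence means $\mathbf{M},k\models\varphi\leftrightarrow\psi$ for all strict timed HT-traces and all $k$. *)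

theory Defs
  imports Main "HOL-Library.Extended_Nat"
begin

text \<open>Intervals [m,n) with m natural and n natural or omega (= \<infinity>).\<close>
type_synonym interval = "nat \<times> enat"

definition in_interval :: "nat \<Rightarrow> interval \<Rightarrow> bool" where
  "in_interval d I \<longleftrightarrow> fst I \<le> d \<and> enat d < snd I"

definition full_interval :: interval where
  "full_interval = (0, \<infinity>)"

datatype 'a mform =
    Atom 'a
  | Bot
  | Impl "'a mform" "'a mform"
  | Conj "'a mform" "'a mform"
  | Disj "'a mform" "'a mform"
  | Prev interval "'a mform"
  | Since interval "'a mform" "'a mform"
  | Trigger interval "'a mform" "'a mform"
  | Next interval "'a mform"
  | Until interval "'a mform" "'a mform"
  | Release interval "'a mform" "'a mform"

definition Top :: "'a mform" where
  "Top = Impl Bot Bot"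

text \<open>Satisfaction in the timed HT-trace ((H,T),tau) of length lam at position k.
  The "here" component H is a parameter, so that implication can also
  evaluate in the total trace ((T,T),tau).\<close>
fun sat :: "(nat \<Rightarrow> 'a set) \<Rightarrow> (nat \<Rightarrow> 'a set) \<Rightarrow> (nat \<Rightarrow> nat) \<Rightarrow> enat \<Rightarrow> nat \<Rightarrow> 'a mform \<Rightarrow> bool" where
  "sat H T tau lam k (Atom p) = (p \<in> H k)"
| "sat H T tau lam k Bot = False"
| "sat H T tau lam k (Impl f g) =
     ((\<not> sat H T tau lam k f \<or> sat H T tau lam k g) \<and>
      (\<not> sat T T tau lam k f \<or> sat T T tau lam k g))"
| "sat H T tau lam k (Conj f g) = (sat H T tau lam k f \<and> sat H T tau lam k g)"
| "sat H T tau lam k (Disj f g) = (sat H T tau lam k f \<or> sat H T tau lam k g)"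
| "sat H T tau lam k (Prev I f) =
     (k > 0 \<and> sat H T tau lam (k - 1) f \<and> in_interval (tau k - tau (k - 1)) I)"
| "sat H T tau lam k (Since I f g) =
     (\<exists>j\<le>k. in_interval (tau k - tau j) I \<and> sat H T tau lam j g \<and>
        (\<forall>i. j < i \<and> i \<le> k \<longrightarrow> sat H T tau lam i f))"
| "sat H T tau lam k (Trigger I f g) =
     (\<forall>j\<le>k. in_interval (tau k - tau j) I \<longrightarrow> sat H T tau lam j g \<or>
        (\<exists>i. j < i \<and> i \<le> k \<and> sat H T tau lam i f))"
| "sat H T tau lam k (Next I f) =
     (enat (k + 1) < lam \<and> sat H T tau lam (k + 1) f \<and> in_interval (tau (k + 1) - tau k) I)"
| "sat H T tau lam k (Until I f g) =
     (\<exists>j. k \<le> j \<and> enat j < lam \<and> in_interval (tau j - tau k) I \<and> sat H T tau lam j g \<and>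
        (\<forall>i. k \<le> i \<and> i < j \<longrightarrow> sat H T tau lam i f))"
| "sat H T tau lam k (Release I f g) =
     (\<forall>j. k \<le> j \<and> enat j < lam \<and> in_interval (tau j - tau k) I \<longrightarrow> sat H T tau lam j g \<or>
        (\<exists>i. k \<le> i \<and> i < j \<and> sat H T tau lam i f))"

definition strict_timed_ht_trace :: "(nat \<Rightarrow> 'a set) \<Rightarrow> (nat \<Rightarrow> 'a set) \<Rightarrow> (nat \<Rightarrow> nat) \<Rightarrow> enat \<Rightarrow> bool" where
  "strict_timed_ht_trace H T tau lam \<longleftrightarrow>
     0 < lam \<and> (\<forall>i. enat i < lam \<longrightarrow> H i \<subseteq> T i) \<and> tau 0 = 0 \<and>
     (\<forall>i. enat (i + 1) < lam \<longrightarrow> tau i < tau (i + 1))"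

definition Iff :: "'a mform \<Rightarrow> 'a mform \<Rightarrow> 'a mform" where
  "Iff f g = Conj (Impl f g) (Impl g f)"

definition mht_equiv :: "'a mform \<Rightarrow> 'a mform \<Rightarrow> bool" where
  "mht_equiv f g \<longleftrightarrow>
     (\<forall>H T tau lam k. strict_timed_ht_trace H T tau lam \<and> enat k < lam \<longrightarrow>
        sat H T tau lam k (Iff f g))"

text \<open>Unary normal form: binary U,R,S,T carry an interval other than [0,\<omega>) only
  when they are the derived unary operators
  box = Bot R_I _, diamond = Top U_I _, historically = Bot T_I _, once = Top S_I _.
  (The hatted next/previous operators are built from primitive next/previous.)\<close>
fun unary_nf :: "'a mform \<Rightarrow> bool" where
  "unary_nf (Atom p) = True"
| "unary_nf Bot = True"
| "unary_nf (Impl f g) = (unary_nf f \<and> unary_nf g)"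
| "unary_nf (Conj f g) = (unary_nf f \<and> unary_nf g)"
| "unary_nf (Disj f g) = (unary_nf f \<and> unary_nf g)"
| "unary_nf (Prev I f) = unary_nf f"
| "unary_nf (Next I f) = unary_nf f"
| "unary_nf (Since I f g) = ((I = full_interval \<or> f = Top) \<and> unary_nf f \<and> unary_nf g)"
| "unary_nf (Trigger I f g) = ((I = full_interval \<or> f = Bot) \<and> unary_nf f \<and> unary_nf g)"
| "unary_nf (Until I f g) = ((I = full_interval \<or> f = Top) \<and> unary_nf f \<and> unary_nf g)"
| "unary_nf (Release I f g) = ((I = full_interval \<or> f = Bot) \<and> unary_nf f \<and> unary_nf g)"

end

(* On a strict trace every step takes a delay d >= 1, which yields the expansion law
     a U_[m,n) b  <->  (0 in [m,n) and b) or (a and, after a step of delay d, a U_[m-d,n-d) b).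
   Splitting the step by its delay, with one next operator over the unit interval [d,d+1) for
   each of the finitely many delays d below n (below m when n = omega, where every larger delay
   leads into the unrestricted a U b), turns the law into a rewriting into unary normal form that
   terminates because the interval shrinks. Since is handled symmetrically, Release and Trigger
   as the pointwise duals of Until and Since. The translation is correct for every here-component
   H, so it also commutes with the HT implication, which is evaluated at H and at T. *)

theory Submission
  imports Defs
begin

lemma in_interval_unit: "in_interval x (d, enat (Suc d)) \<longleftrightarrow> x = d"
  by (auto simp: in_interval_def)

lemma in_interval_from [simp]: "in_interval x (m, \<infinity>) \<longleftrightarrow> m \<le> x"
  by (simp add: in_interval_def)

fun delay_bound :: "nat \<Rightarrow> enat \<Rightarrow> nat" where
  "delay_bound m (enat n) = n"
| "delay_bound m \<infinity> = m"

lemma delay_bound_decreasing: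
  "\<not> (n = \<infinity> \<and> m = 0) \<Longrightarrow> d \<in> set [1..<delay_bound m n] \<Longrightarrow>
     delay_bound (m - d) (n - enat d) < delay_bound m n"
  by (cases n) auto

lemma in_interval_add_iff:
  assumes "0 < d" and "\<not> (n = \<infinity> \<and> m = 0)"
  shows "in_interval (d + e) (m, n) \<longleftrightarrow>
     d \<in> set [1..<delay_bound m n] \<and> in_interval e (m - d, n - enat d) \<or> n = \<infinity> \<and> m \<le> d"
  using assms by (cases n) (auto simp: in_interval_def)

lemma enat_le_less_trans: "i \<le> j \<Longrightarrow> enat j < lam \<Longrightarrow> enat i < lam"
  by (meson enat_ord_simps(1) order.strict_trans1)

lemma strict_timed_ht_trace_strict_mono:
  assumes "strict_timed_ht_trace H T tau lam"
  shows "strict_mono_on {i. enat i < lam} tau"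
proof (rule strict_mono_onI)
  fix i j assume j: "j \<in> {i. enat i < lam}" and "i < j"
  have step: "tau x < tau (Suc x)" if "x \<in> {i. enat (Suc i) < lam}" for x
    using assms that by (simp add: strict_timed_ht_trace_def)
  have "{i..<j} \<subseteq> {i. enat (Suc i) < lam}"
  proof
    fix x assume "x \<in> {i..<j}"
    with j show "x \<in> {i. enat (Suc i) < lam}" using enat_le_less_trans[of "Suc x" j] by simp
  qed
  then show "tau i < tau j"
    using lift_Suc_mono_less_ivl[where f = tau and N = "{i. enat (Suc i) < lam}"] step \<open>i < j\<close>
    by blast
qed

fun Disjs :: "'a mform list \<Rightarrow> 'a mform" where
  "Disjs [] = Bot"
| "Disjs (f # fs) = Disj f (Disjs fs)"

fun Conjs :: "'a mform list \<Rightarrow> 'a mform" where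
  "Conjs [] = Top"
| "Conjs (f # fs) = Conj f (Conjs fs)"

definition WNext :: "interval \<Rightarrow> 'a mform \<Rightarrow> 'a mform" where
  "WNext I f = Disj (Next I f) (Impl (Next I Top) Bot)"

definition WPrev :: "interval \<Rightarrow> 'a mform \<Rightarrow> 'a mform" where
  "WPrev I f = Disj (Prev I f) (Impl (Prev I Top) Bot)"

lemma sat_Top [simp]: "sat H T tau lam k Top"
  by (simp add: Top_def)

lemma sat_Disjs: "sat H T tau lam k (Disjs fs) \<longleftrightarrow> (\<exists>f\<in>set fs. sat H T tau lam k f)"
  by (induction fs) auto

lemma sat_Conjs: "sat H T tau lam k (Conjs fs) \<longleftrightarrow> (\<forall>f\<in>set fs. sat H T tau lam k f)"
  by (induction fs) auto

lemma sat_WNext [simp]: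
  "sat H T tau lam k (WNext I f) \<longleftrightarrow>
     (enat (k + 1) < lam \<and> in_interval (tau (k + 1) - tau k) I \<longrightarrow> sat H T tau lam (k + 1) f)"
  by (auto simp: WNext_def)

lemma sat_WPrev [simp]:
  "sat H T tau lam k (WPrev I f) \<longleftrightarrow>
     (0 < k \<and> in_interval (tau k - tau (k - 1)) I \<longrightarrow> sat H T tau lam (k - 1) f)"
  by (auto simp: WPrev_def)

lemma sat_Disjs_Next_unit:
  "sat H T tau lam k (Disjs (map (\<lambda>d. Next (d, enat (Suc d)) (F d)) ds)) \<longleftrightarrow>
     enat (k + 1) < lam \<and> tau (k + 1) - tau k \<in> set ds \<and>
     sat H T tau lam (k + 1) (F (tau (k + 1) - tau k))"
  by (auto simp: sat_Disjs in_interval_unit)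

lemma sat_Conjs_WNext_unit:
  "sat H T tau lam k (Conjs (map (\<lambda>d. WNext (d, enat (Suc d)) (F d)) ds)) \<longleftrightarrow>
     (enat (k + 1) < lam \<and> tau (k + 1) - tau k \<in> set ds \<longrightarrow>
      sat H T tau lam (k + 1) (F (tau (k + 1) - tau k)))"
  by (auto simp: sat_Conjs in_interval_unit)

lemma sat_Disjs_Prev_unit:
  "sat H T tau lam k (Disjs (map (\<lambda>d. Prev (d, enat (Suc d)) (F d)) ds)) \<longleftrightarrow>
     0 < k \<and> tau k - tau (k - 1) \<in> set ds \<and> sat H T tau lam (k - 1) (F (tau k - tau (k - 1)))"
  by (auto simp: sat_Disjs in_interval_unit)

lemma sat_Conjs_WPrev_unit:
  "sat H T tau lam k (Conjs (map (\<lambda>d. WPrev (d, enat (Suc d)) (F d)) ds)) \<longleftrightarrow>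
     (0 < k \<and> tau k - tau (k - 1) \<in> set ds \<longrightarrow> sat H T tau lam (k - 1) (F (tau k - tau (k - 1))))"
  by (auto simp: sat_Conjs in_interval_unit)

lemma unary_nf_Top [simp]: "unary_nf Top"
  by (simp add: Top_def)

lemma unary_nf_Disjs [simp]: "unary_nf (Disjs fs) \<longleftrightarrow> (\<forall>f\<in>set fs. unary_nf f)"
  by (induction fs) auto

lemma unary_nf_Conjs [simp]: "unary_nf (Conjs fs) \<longleftrightarrow> (\<forall>f\<in>set fs. unary_nf f)"
  by (induction fs) auto

lemma unary_nf_WNext [simp]: "unary_nf (WNext I f) \<longleftrightarrow> unary_nf f"
  by (simp add: WNext_def)

lemma unary_nf_WPrev [simp]: "unary_nf (WPrev I f) \<longleftrightarrow> unary_nf f"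
  by (simp add: WPrev_def)

definition metric_until ::
    "(nat \<Rightarrow> nat) \<Rightarrow> enat \<Rightarrow> nat \<Rightarrow> enat \<Rightarrow> (nat \<Rightarrow> bool) \<Rightarrow> (nat \<Rightarrow> bool) \<Rightarrow> nat \<Rightarrow> bool" where
  "metric_until tau lam m n A B k \<longleftrightarrow>
     (\<exists>j\<ge>k. enat j < lam \<and> in_interval (tau j - tau k) (m, n) \<and> B j \<and> (\<forall>i. k \<le> i \<and> i < j \<longrightarrow> A i))"

definition metric_since ::
    "(nat \<Rightarrow> nat) \<Rightarrow> nat \<Rightarrow> enat \<Rightarrow> (nat \<Rightarrow> bool) \<Rightarrow> (nat \<Rightarrow> bool) \<Rightarrow> nat \<Rightarrow> bool" where
  "metric_since tau m n A B k \<longleftrightarrow>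
     (\<exists>j\<le>k. in_interval (tau k - tau j) (m, n) \<and> B j \<and> (\<forall>i. j < i \<and> i \<le> k \<longrightarrow> A i))"

lemma sat_Until:
  "sat H T tau lam k (Until (m, n) a b) \<longleftrightarrow>
     metric_until tau lam m n (\<lambda>i. sat H T tau lam i a) (\<lambda>i. sat H T tau lam i b) k"
  by (auto simp: metric_until_def)

lemma sat_Release:
  "sat H T tau lam k (Release (m, n) a b) \<longleftrightarrow>
     \<not> metric_until tau lam m n (\<lambda>i. \<not> sat H T tau lam i a) (\<lambda>i. \<not> sat H T tau lam i b) k"
  by (auto simp: metric_until_def)

lemma sat_Since:
  "sat H T tau lam k (Since (m, n) a b) \<longleftrightarrow>
     metric_since tau m n (\<lambda>i. sat H T tau lam i a) (\<lambda>i. sat H T tau lam i b) k"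
  by (simp add: metric_since_def)

lemma sat_Trigger:
  "sat H T tau lam k (Trigger (m, n) a b) \<longleftrightarrow>
     \<not> metric_since tau m n (\<lambda>i. \<not> sat H T tau lam i a) (\<lambda>i. \<not> sat H T tau lam i b) k"
  by (auto simp: metric_since_def)

lemma metric_until_cong:
  assumes "\<And>i. enat i < lam \<Longrightarrow> A i = A' i" and "\<And>i. enat i < lam \<Longrightarrow> B i = B' i"
  shows "metric_until tau lam m n A B k = metric_until tau lam m n A' B' k"
  unfolding metric_until_def using assms enat_le_less_trans less_imp_le by meson

lemma metric_since_cong:
  assumes "enat k < lam"
    and "\<And>i. enat i < lam \<Longrightarrow> A i = A' i" and "\<And>i. enat i < lam \<Longrightarrow> B i = B' i"
  shows "metric_since tau m n A B k = metric_since tau m n A' B' k"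
  unfolding metric_since_def using assms enat_le_less_trans by meson

lemma ex_until_iff:
  fixes k :: nat
  shows "(\<exists>j\<ge>k. P j \<and> (\<forall>i. k \<le> i \<and> i < j \<longrightarrow> A i)) \<longleftrightarrow>
     P k \<or> A k \<and> (\<exists>j\<ge>k + 1. P j \<and> (\<forall>i. k + 1 \<le> i \<and> i < j \<longrightarrow> A i))"
  (is "?lhs \<longleftrightarrow> ?rhs")
proof
  assume ?lhs
  then obtain j where j: "k \<le> j" "P j" "\<forall>i. k \<le> i \<and> i < j \<longrightarrow> A i" by blast
  show ?rhs
  proof (cases "j = k")
    case False
    with j have "k < j" by simp
    with j show ?thesis by (auto intro!: exI[of _ j])
  qed (use j in simp)
next
  assume ?rhs
  then show ?lhs
  proof (elim disjE conjE exE)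
    fix j assume "A k" "k + 1 \<le> j" "P j" "\<forall>i. k + 1 \<le> i \<and> i < j \<longrightarrow> A i"
    then have "\<forall>i. k \<le> i \<and> i < j \<longrightarrow> A i"
      by (metis le_neq_implies_less less_iff_succ_less_eq)
    with \<open>k + 1 \<le> j\<close> \<open>P j\<close> show ?lhs by (auto intro!: exI[of _ j])
  qed auto
qed

lemma ex_since_iff:
  fixes k :: nat
  shows "(\<exists>j\<le>k. P j \<and> (\<forall>i. j < i \<and> i \<le> k \<longrightarrow> A i)) \<longleftrightarrow>
     P k \<or> 0 < k \<and> A k \<and> (\<exists>j\<le>k - 1. P j \<and> (\<forall>i. j < i \<and> i \<le> k - 1 \<longrightarrow> A i))"
  (is "?lhs \<longleftrightarrow> ?rhs")
proof
  assume ?lhs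
  then obtain j where j: "j \<le> k" "P j" "\<forall>i. j < i \<and> i \<le> k \<longrightarrow> A i" by blast
  show ?rhs
  proof (cases "j = k")
    case False
    with j have "j < k" by simp
    with j show ?thesis by (auto intro!: exI[of _ j])
  qed (use j in simp)
next
  assume ?rhs
  then show ?lhs
  proof (elim disjE conjE exE)
    fix j assume "0 < k" "A k" "j \<le> k - 1" "P j" "\<forall>i. j < i \<and> i \<le> k - 1 \<longrightarrow> A i"
    then have "\<forall>i. j < i \<and> i \<le> k \<longrightarrow> A i" by (auto simp: le_less)
    with \<open>j \<le> k - 1\<close> \<open>P j\<close> show ?lhs by (auto intro!: exI[of _ j])
  qed auto
qed

lemma metric_until_expand:
  assumes tau: "strict_mono_on {i. enat i < lam} tau" and k: "enat k < lam"
    and bounded: "\<not> (n = \<infinity> \<and> m = 0)"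
  shows "metric_until tau lam m n A B k \<longleftrightarrow>
     in_interval 0 (m, n) \<and> B k \<or>
     A k \<and> enat (k + 1) < lam \<and>
     (let d = tau (k + 1) - tau k in
        d \<in> set [1..<delay_bound m n] \<and> metric_until tau lam (m - d) (n - enat d) A B (k + 1) \<or>
        n = \<infinity> \<and> m \<le> d \<and> metric_until tau lam 0 \<infinity> A B (k + 1))"
proof -
  define d where "d = tau (k + 1) - tau k"
  have split: "in_interval (tau j - tau k) (m, n) \<longleftrightarrow>
      d \<in> set [1..<delay_bound m n] \<and> in_interval (tau j - tau (k + 1)) (m - d, n - enat d) \<or>
      n = \<infinity> \<and> m \<le> d"
    if "k + 1 \<le> j" "enat j < lam" for j
  proof -
    have "tau k < tau (k + 1)" "tau (k + 1) \<le> tau j"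
      using that k enat_le_less_trans[OF that] strict_mono_onD[OF tau] strict_mono_on_leD[OF tau] by auto
    then have "0 < d" "tau j - tau k = d + (tau j - tau (k + 1))" by (auto simp: d_def)
    then show ?thesis using in_interval_add_iff bounded by simp
  qed
  have later: "(\<exists>j\<ge>k + 1. enat j < lam \<and> in_interval (tau j - tau k) (m, n) \<and> B j \<and>
        (\<forall>i. k + 1 \<le> i \<and> i < j \<longrightarrow> A i)) \<longleftrightarrow>
     enat (k + 1) < lam \<and>
       (d \<in> set [1..<delay_bound m n] \<and> metric_until tau lam (m - d) (n - enat d) A B (k + 1) \<or>
        n = \<infinity> \<and> m \<le> d \<and> metric_until tau lam 0 \<infinity> A B (k + 1))"
    (is "?later \<longleftrightarrow> ?expanded")
  proof
    assume ?later
    then obtain j where j: "k + 1 \<le> j" "enat j < lam" "in_interval (tau j - tau k) (m, n)" "B j"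
      "\<forall>i. k + 1 \<le> i \<and> i < j \<longrightarrow> A i" by blast
    then have "metric_until tau lam 0 \<infinity> A B (k + 1)"
      and "in_interval (tau j - tau (k + 1)) (m - d, n - enat d) \<Longrightarrow>
        metric_until tau lam (m - d) (n - enat d) A B (k + 1)"
      unfolding metric_until_def by auto
    with j split[OF j(1,2)] enat_le_less_trans[OF j(1,2)] show ?expanded by auto
  next
    assume ?expanded
    then obtain j where "k + 1 \<le> j" "enat j < lam" "B j" "\<forall>i. k + 1 \<le> i \<and> i < j \<longrightarrow> A i"
      "d \<in> set [1..<delay_bound m n] \<and> in_interval (tau j - tau (k + 1)) (m - d, n - enat d) \<or>
       n = \<infinity> \<and> m \<le> d"
      unfolding metric_until_def by auto
    with split show ?later by blast
  qed
  have "metric_until tau lam m n A B k \<longleftrightarrow>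
     in_interval 0 (m, n) \<and> B k \<or>
     A k \<and> (\<exists>j\<ge>k + 1. enat j < lam \<and> in_interval (tau j - tau k) (m, n) \<and> B j \<and>
        (\<forall>i. k + 1 \<le> i \<and> i < j \<longrightarrow> A i))"
    using ex_until_iff[of k "\<lambda>j. enat j < lam \<and> in_interval (tau j - tau k) (m, n) \<and> B j" A] k
    unfolding metric_until_def by (simp add: conj_assoc)
  with later show ?thesis by (simp add: d_def Let_def)
qed

lemma metric_since_expand:
  assumes tau: "strict_mono_on {i. enat i < lam} tau" and k: "enat k < lam"
    and bounded: "\<not> (n = \<infinity> \<and> m = 0)"
  shows "metric_since tau m n A B k \<longleftrightarrow>
     in_interval 0 (m, n) \<and> B k \<or>
     0 < k \<and> A k \<and>
     (let d = tau k - tau (k - 1) in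
        d \<in> set [1..<delay_bound m n] \<and> metric_since tau (m - d) (n - enat d) A B (k - 1) \<or>
        n = \<infinity> \<and> m \<le> d \<and> metric_since tau 0 \<infinity> A B (k - 1))"
proof -
  define d where "d = tau k - tau (k - 1)"
  have split: "in_interval (tau k - tau j) (m, n) \<longleftrightarrow>
      d \<in> set [1..<delay_bound m n] \<and> in_interval (tau (k - 1) - tau j) (m - d, n - enat d) \<or>
      n = \<infinity> \<and> m \<le> d"
    if "j \<le> k - 1" "0 < k" for j
  proof -
    have "enat (k - 1) < lam" using enat_le_less_trans[of "k - 1" k] k by simp
    moreover have "enat j < lam" using enat_le_less_trans[OF that(1) calculation] .
    ultimately have "tau (k - 1) < tau k" "tau j \<le> tau (k - 1)"
      using that k strict_mono_onD[OF tau] strict_mono_on_leD[OF tau] by auto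
    then have "0 < d" "tau k - tau j = d + (tau (k - 1) - tau j)" by (auto simp: d_def)
    then show ?thesis using in_interval_add_iff bounded by simp
  qed
  have earlier: "(\<exists>j\<le>k - 1. in_interval (tau k - tau j) (m, n) \<and> B j \<and>
        (\<forall>i. j < i \<and> i \<le> k - 1 \<longrightarrow> A i)) \<longleftrightarrow>
       d \<in> set [1..<delay_bound m n] \<and> metric_since tau (m - d) (n - enat d) A B (k - 1) \<or>
       n = \<infinity> \<and> m \<le> d \<and> metric_since tau 0 \<infinity> A B (k - 1)"
    (is "?earlier \<longleftrightarrow> ?expanded") if "0 < k"
  proof
    assume ?earlier
    then obtain j where j: "j \<le> k - 1" "in_interval (tau k - tau j) (m, n)" "B j"
      "\<forall>i. j < i \<and> i \<le> k - 1 \<longrightarrow> A i" by blast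
    then have "metric_since tau 0 \<infinity> A B (k - 1)"
      and "in_interval (tau (k - 1) - tau j) (m - d, n - enat d) \<Longrightarrow>
        metric_since tau (m - d) (n - enat d) A B (k - 1)"
      unfolding metric_since_def by auto
    with j split[OF j(1) that] show ?expanded by auto
  next
    assume ?expanded
    then obtain j where "j \<le> k - 1" "B j" "\<forall>i. j < i \<and> i \<le> k - 1 \<longrightarrow> A i"
      "d \<in> set [1..<delay_bound m n] \<and> in_interval (tau (k - 1) - tau j) (m - d, n - enat d) \<or>
       n = \<infinity> \<and> m \<le> d"
      unfolding metric_since_def by auto
    with split that show ?earlier by blast
  qed
  have "metric_since tau m n A B k \<longleftrightarrow>
     in_interval 0 (m, n) \<and> B k \<or>
     0 < k \<and> A k \<and> (\<exists>j\<le>k - 1. in_interval (tau k - tau j) (m, n) \<and> B j \<and>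
        (\<forall>i. j < i \<and> i \<le> k - 1 \<longrightarrow> A i))"
    using ex_since_iff[of k "\<lambda>j. in_interval (tau k - tau j) (m, n) \<and> B j" A]
    unfolding metric_since_def by (simp add: conj_assoc)
  with earlier show ?thesis by (auto simp: d_def Let_def)
qed

function until_nf :: "nat \<Rightarrow> enat \<Rightarrow> 'a mform \<Rightarrow> 'a mform \<Rightarrow> 'a mform" where
  "until_nf m n a b =
     (if n = \<infinity> \<and> m = 0 then Until full_interval a b
      else Disj (if in_interval 0 (m, n) then b else Bot)
        (Conj a
          (Disj (Disjs (map (\<lambda>d. Next (d, enat (Suc d)) (until_nf (m - d) (n - enat d) a b))
                [1..<delay_bound m n]))
            (if n = \<infinity> then Next (m, \<infinity>) (Until full_interval a b) else Bot))))"
  by pat_completeness auto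
termination
  by (relation "measure (\<lambda>(m, n, a, b). delay_bound m n)") (auto intro: delay_bound_decreasing)

function release_nf :: "nat \<Rightarrow> enat \<Rightarrow> 'a mform \<Rightarrow> 'a mform \<Rightarrow> 'a mform" where
  "release_nf m n a b =
     (if n = \<infinity> \<and> m = 0 then Release full_interval a b
      else Conj (if in_interval 0 (m, n) then b else Top)
        (Disj a
          (Conj (Conjs (map (\<lambda>d. WNext (d, enat (Suc d)) (release_nf (m - d) (n - enat d) a b))
                [1..<delay_bound m n]))
            (if n = \<infinity> then WNext (m, \<infinity>) (Release full_interval a b) else Top))))"
  by pat_completeness auto
termination
  by (relation "measure (\<lambda>(m, n, a, b). delay_bound m n)") (auto intro: delay_bound_decreasing)

function since_nf :: "nat \<Rightarrow> enat \<Rightarrow> 'a mform \<Rightarrow> 'a mform \<Rightarrow> 'a mform" where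
  "since_nf m n a b =
     (if n = \<infinity> \<and> m = 0 then Since full_interval a b
      else Disj (if in_interval 0 (m, n) then b else Bot)
        (Conj a
          (Disj (Disjs (map (\<lambda>d. Prev (d, enat (Suc d)) (since_nf (m - d) (n - enat d) a b))
                [1..<delay_bound m n]))
            (if n = \<infinity> then Prev (m, \<infinity>) (Since full_interval a b) else Bot))))"
  by pat_completeness auto
termination
  by (relation "measure (\<lambda>(m, n, a, b). delay_bound m n)") (auto intro: delay_bound_decreasing)

function trigger_nf :: "nat \<Rightarrow> enat \<Rightarrow> 'a mform \<Rightarrow> 'a mform \<Rightarrow> 'a mform" where
  "trigger_nf m n a b =
     (if n = \<infinity> \<and> m = 0 then Trigger full_interval a b
      else Conj (if in_interval 0 (m, n) then b else Top)
        (Disj a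
          (Conj (Conjs (map (\<lambda>d. WPrev (d, enat (Suc d)) (trigger_nf (m - d) (n - enat d) a b))
                [1..<delay_bound m n]))
            (if n = \<infinity> then WPrev (m, \<infinity>) (Trigger full_interval a b) else Top))))"
  by pat_completeness auto
termination
  by (relation "measure (\<lambda>(m, n, a, b). delay_bound m n)") (auto intro: delay_bound_decreasing)

declare until_nf.simps [simp del] release_nf.simps [simp del]
  since_nf.simps [simp del] trigger_nf.simps [simp del]

lemma unary_nf_until_nf: "unary_nf a \<Longrightarrow> unary_nf b \<Longrightarrow> unary_nf (until_nf m n a b)"
  by (induction m n a b rule: until_nf.induct) (subst until_nf.simps, auto simp: full_interval_def)

lemma unary_nf_release_nf: "unary_nf a \<Longrightarrow> unary_nf b \<Longrightarrow> unary_nf (release_nf m n a b)"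
  by (induction m n a b rule: release_nf.induct) (subst release_nf.simps, auto simp: full_interval_def)

lemma unary_nf_since_nf: "unary_nf a \<Longrightarrow> unary_nf b \<Longrightarrow> unary_nf (since_nf m n a b)"
  by (induction m n a b rule: since_nf.induct) (subst since_nf.simps, auto simp: full_interval_def)

lemma unary_nf_trigger_nf: "unary_nf a \<Longrightarrow> unary_nf b \<Longrightarrow> unary_nf (trigger_nf m n a b)"
  by (induction m n a b rule: trigger_nf.induct) (subst trigger_nf.simps, auto simp: full_interval_def)

lemma sat_until_nf:
  assumes tau: "strict_mono_on {i. enat i < lam} tau"
  shows "enat k < lam \<Longrightarrow> sat H T tau lam k (until_nf m n a b) \<longleftrightarrow>
    metric_until tau lam m n (\<lambda>i. sat H T tau lam i a) (\<lambda>i. sat H T tau lam i b) k"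
proof (induction m n a b arbitrary: k rule: until_nf.induct)
  case (1 m n a b k)
  show ?case
  proof (cases "n = \<infinity> \<and> m = 0")
    case True
    then show ?thesis by (simp add: until_nf.simps full_interval_def metric_until_def)
  next
    case False
    \<comment> \<open>Abstracting the delay stops simp from rewriting \<open>m - (tau (Suc k) - tau k)\<close> with
      \<open>diff_diff_right\<close>, which would put the recursive call out of reach of the induction hypothesis.\<close>
    obtain d where d: "tau (Suc k) - tau k = d" by simp
    show ?thesis
      using "1.IH"[OF False, of d "k + 1"] False
      by (subst until_nf.simps)
        (auto simp: metric_until_expand[OF tau "1.prems" False] sat_Disjs_Next_unit d
          full_interval_def metric_until_def[of tau lam 0 \<infinity>])
  qed
qed

lemma sat_release_nf:
  assumes tau: "strict_mono_on {i. enat i < lam} tau"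
  shows "enat k < lam \<Longrightarrow> sat H T tau lam k (release_nf m n a b) \<longleftrightarrow>
    \<not> metric_until tau lam m n (\<lambda>i. \<not> sat H T tau lam i a) (\<lambda>i. \<not> sat H T tau lam i b) k"
proof (induction m n a b arbitrary: k rule: release_nf.induct)
  case (1 m n a b k)
  show ?case
  proof (cases "n = \<infinity> \<and> m = 0")
    case True
    then show ?thesis by (auto simp: release_nf.simps full_interval_def metric_until_def)
  next
    case False
    obtain d where d: "tau (Suc k) - tau k = d" by simp
    show ?thesis
      using "1.IH"[OF False, of d "k + 1"] False
      by (subst release_nf.simps)
        (auto simp: metric_until_expand[OF tau "1.prems" False] sat_Conjs_WNext_unit d
          full_interval_def metric_until_def[of tau lam 0 \<infinity>])
  qed
qed

lemma sat_since_nf: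
  assumes tau: "strict_mono_on {i. enat i < lam} tau"
  shows "enat k < lam \<Longrightarrow> sat H T tau lam k (since_nf m n a b) \<longleftrightarrow>
    metric_since tau m n (\<lambda>i. sat H T tau lam i a) (\<lambda>i. sat H T tau lam i b) k"
proof (induction m n a b arbitrary: k rule: since_nf.induct)
  case (1 m n a b k)
  show ?case
  proof (cases "n = \<infinity> \<and> m = 0")
    case True
    then show ?thesis by (simp add: since_nf.simps full_interval_def metric_since_def)
  next
    case False
    obtain d where d: "tau k - tau (k - Suc 0) = d" by simp
    have "enat (k - 1) < lam" using enat_le_less_trans[of "k - 1" k] "1.prems" by simp
    then show ?thesis
      using "1.IH"[OF False, of d "k - 1"] False
      by (subst since_nf.simps)
        (auto simp: metric_since_expand[OF tau "1.prems" False] sat_Disjs_Prev_unit d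
          full_interval_def metric_since_def[of tau 0 \<infinity>])
  qed
qed

lemma sat_trigger_nf:
  assumes tau: "strict_mono_on {i. enat i < lam} tau"
  shows "enat k < lam \<Longrightarrow> sat H T tau lam k (trigger_nf m n a b) \<longleftrightarrow>
    \<not> metric_since tau m n (\<lambda>i. \<not> sat H T tau lam i a) (\<lambda>i. \<not> sat H T tau lam i b) k"
proof (induction m n a b arbitrary: k rule: trigger_nf.induct)
  case (1 m n a b k)
  show ?case
  proof (cases "n = \<infinity> \<and> m = 0")
    case True
    then show ?thesis by (simp add: trigger_nf.simps full_interval_def metric_since_def)
  next
    case False
    obtain d where d: "tau k - tau (k - Suc 0) = d" by simp
    have "enat (k - 1) < lam" using enat_le_less_trans[of "k - 1" k] "1.prems" by simp
    then show ?thesis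
      using "1.IH"[OF False, of d "k - 1"] False
      by (subst trigger_nf.simps)
        (auto simp: metric_since_expand[OF tau "1.prems" False] sat_Conjs_WPrev_unit d
          full_interval_def metric_since_def[of tau 0 \<infinity>])
  qed
qed

fun to_unary_nf :: "'a mform \<Rightarrow> 'a mform" where
  "to_unary_nf (Atom p) = Atom p"
| "to_unary_nf Bot = Bot"
| "to_unary_nf (Impl f g) = Impl (to_unary_nf f) (to_unary_nf g)"
| "to_unary_nf (Conj f g) = Conj (to_unary_nf f) (to_unary_nf g)"
| "to_unary_nf (Disj f g) = Disj (to_unary_nf f) (to_unary_nf g)"
| "to_unary_nf (Prev I f) = Prev I (to_unary_nf f)"
| "to_unary_nf (Next I f) = Next I (to_unary_nf f)"
| "to_unary_nf (Since (m, n) f g) = since_nf m n (to_unary_nf f) (to_unary_nf g)"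
| "to_unary_nf (Trigger (m, n) f g) = trigger_nf m n (to_unary_nf f) (to_unary_nf g)"
| "to_unary_nf (Until (m, n) f g) = until_nf m n (to_unary_nf f) (to_unary_nf g)"
| "to_unary_nf (Release (m, n) f g) = release_nf m n (to_unary_nf f) (to_unary_nf g)"

lemma unary_nf_to_unary_nf: "unary_nf (to_unary_nf f)"
  by (induction f rule: to_unary_nf.induct)
    (auto intro: unary_nf_until_nf unary_nf_release_nf unary_nf_since_nf unary_nf_trigger_nf)

lemma sat_to_unary_nf:
  assumes tau: "strict_mono_on {i. enat i < lam} tau"
  shows "enat k < lam \<Longrightarrow> sat H T tau lam k (to_unary_nf f) \<longleftrightarrow> sat H T tau lam k f"
proof (induction f arbitrary: H k)
  case (Prev I f)
  then show ?case using enat_le_less_trans[of "k - 1" k] by auto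
next
  case (Since I f g)
  obtain m n where I: "I = (m, n)" by fastforce
  have "sat H T tau lam k (to_unary_nf (Since I f g)) \<longleftrightarrow>
      metric_since tau m n (\<lambda>i. sat H T tau lam i (to_unary_nf f)) (\<lambda>i. sat H T tau lam i (to_unary_nf g)) k"
    using sat_since_nf[OF tau Since.prems] by (simp add: I)
  also have "\<dots> \<longleftrightarrow> sat H T tau lam k (Since I f g)"
    unfolding I sat_Since using Since.IH Since.prems by (intro metric_since_cong) auto
  finally show ?case .
next
  case (Trigger I f g)
  obtain m n where I: "I = (m, n)" by fastforce
  have "sat H T tau lam k (to_unary_nf (Trigger I f g)) \<longleftrightarrow>
      \<not> metric_since tau m n (\<lambda>i. \<not> sat H T tau lam i (to_unary_nf f))
          (\<lambda>i. \<not> sat H T tau lam i (to_unary_nf g)) k"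
    using sat_trigger_nf[OF tau Trigger.prems] by (simp add: I)
  also have "\<dots> \<longleftrightarrow> sat H T tau lam k (Trigger I f g)"
    unfolding I sat_Trigger using Trigger.IH Trigger.prems
    by (intro arg_cong[where f = Not] metric_since_cong) auto
  finally show ?case .
next
  case (Until I f g)
  obtain m n where I: "I = (m, n)" by fastforce
  have "sat H T tau lam k (to_unary_nf (Until I f g)) \<longleftrightarrow>
      metric_until tau lam m n (\<lambda>i. sat H T tau lam i (to_unary_nf f)) (\<lambda>i. sat H T tau lam i (to_unary_nf g)) k"
    using sat_until_nf[OF tau Until.prems] by (simp add: I)
  also have "\<dots> \<longleftrightarrow> sat H T tau lam k (Until I f g)"
    unfolding I sat_Until using Until.IH by (intro metric_until_cong) auto
  finally show ?case .
next
  case (Release I f g)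
  obtain m n where I: "I = (m, n)" by fastforce
  have "sat H T tau lam k (to_unary_nf (Release I f g)) \<longleftrightarrow>
      \<not> metric_until tau lam m n (\<lambda>i. \<not> sat H T tau lam i (to_unary_nf f))
          (\<lambda>i. \<not> sat H T tau lam i (to_unary_nf g)) k"
    using sat_release_nf[OF tau Release.prems] by (simp add: I)
  also have "\<dots> \<longleftrightarrow> sat H T tau lam k (Release I f g)"
    unfolding I sat_Release using Release.IH by (intro arg_cong[where f = Not] metric_until_cong) auto
  finally show ?case .
qed auto

theorem corollary4:
  fixes \<phi> :: "'a mform"
  shows "\<exists>\<psi>. unary_nf \<psi> \<and> mht_equiv \<phi> \<psi>"
proof (intro exI conjI)
  show "unary_nf (to_unary_nf \<phi>)" by (rule unary_nf_to_unary_nf)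
  show "mht_equiv \<phi> (to_unary_nf \<phi>)"
    unfolding mht_equiv_def Iff_def
  proof (intro allI impI)
    fix H T :: "nat \<Rightarrow> 'a set" and tau lam k
    assume "strict_timed_ht_trace H T tau lam \<and> enat k < lam"
    then have "strict_mono_on {i. enat i < lam} tau" and "enat k < lam"
      using strict_timed_ht_trace_strict_mono by auto
    then show "sat H T tau lam k (Conj (Impl \<phi> (to_unary_nf \<phi>)) (Impl (to_unary_nf \<phi>) \<phi>))"
      by (simp add: sat_to_unary_nf)
  qed
qed

end
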